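(* Consider a $k$-label broadcasting tree with parameter $\theta\in(0,1)$ (see context), and for a vertex $v$ let $X_t^{(i)}(\ell_{T_{\leq t}(v)})=\mathbb{P}(\ell(v)=i\mid \ell_{T_{\leq t}(v)})$ under the uniform prior on $\ell(v)\in[k]$. Then for any $i\neq j\in[k]$ and $t\geq 2$, $$\log\frac{X_t^{(i)}(\ell_{T_{\leq t}(v)})}{X_t^{(j)}(\ell_{T_{\leq t}(v)})}=\log\frac{X_1^{(i)}(\ell_{T_{1}(v)})}{X_1^{(j)}(\ell_{T_{1}(v)})}+\sum_{u\in\mathcal{C}^{\rm u}(v)}\log\frac{1+\frac{k\theta}{1-\theta}X_{t-1}^{(i)}(\ell_{T_{\leq t-1}(u)})}{1+\frac{k\theta}{1-\theta}X_{t-1}^{(j)}(\ell_{T_{\leq t-1}(u)})}.$$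
   Context: $k$-label broadcasting tree: labels lie in $[k]=\{1,\dots,k\}$; conditionally on the label of a vertex $v$, each child $u$ independently has $\ell(u)=\ell(v)$ with probability $\theta+\frac{1-\theta}{k}$ and $\ell(u)=l$ for each $l\in[k]\setminus\{\ell(v)\}$ with probability $\frac{1-\theta}{k}$. Each vertex's children are split into labeled children $\mathcal{C}^{\rm l}(v)$ (label revealed) and unlabeled children $\mathcal{C}^{\rm u}(v)$. $\ell_{T_{\leq t}(v)}$ denotes the revealed labels in the subtree of depth $\leq t$ rooted at $v$, and $\ell_{T_1(v)}$ the revealed labels among the children of $v$. *)

theory Defs
  imports Complex_Main "HOL-Library.FuncSet"
begin

text \<open>A finite rooted tree. Each child of a vertex carries its revealed label
  (Some l: labeled child, label l revealed) or None (unlabeled child).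
  The root's own label is never revealed.\<close>
datatype tree = Node "(nat option \<times> tree) list"

fun children :: "tree \<Rightarrow> (nat option \<times> tree) list" where
  "children (Node cs) = cs"

text \<open>Vertices of the subtree of depth at most t, as paths of child indices from the root.\<close>
fun verts :: "nat \<Rightarrow> tree \<Rightarrow> nat list set" where
  "verts 0 _ = {[]}"
| "verts (Suc t) (Node cs) =
     insert [] (\<Union>n<length cs. (Cons n) ` verts t (snd (cs ! n)))"

fun obs :: "tree \<Rightarrow> nat list \<Rightarrow> nat option" where
  "obs (Node cs) [] = None"
| "obs (Node cs) (n # p) =
     (if n < length cs then (if p = [] then fst (cs ! n) else obs (snd (cs ! n)) p) else None)"

definition labels_ok :: "nat \<Rightarrow> tree \<Rightarrow> bool" where
  "labels_ok k T \<longleftrightarrow> (\<forall>p l. obs T p = Some l \<longrightarrow> l \<in> {1..k})"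

definition trans :: "nat \<Rightarrow> real \<Rightarrow> nat \<Rightarrow> nat \<Rightarrow> real" where
  "trans k \<theta> a b = (if a = b then \<theta> + (1 - \<theta>) / k else (1 - \<theta>) / k)"

definition labelings :: "nat \<Rightarrow> nat \<Rightarrow> tree \<Rightarrow> (nat list \<Rightarrow> nat) set" where
  "labelings k t T = PiE (verts t T) (\<lambda>_. {1..k})"

text \<open>Joint probability of a full labeling: uniform prior at the root times
  the broadcast transitions along every edge.\<close>
definition weight :: "nat \<Rightarrow> real \<Rightarrow> nat \<Rightarrow> tree \<Rightarrow> (nat list \<Rightarrow> nat) \<Rightarrow> real" where
  "weight k \<theta> t T \<sigma> = (1 / real k) *
     (\<Prod>p \<in> verts t T - {[]}. trans k \<theta> (\<sigma> (butlast p)) (\<sigma> p))"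

definition consistent :: "nat \<Rightarrow> tree \<Rightarrow> (nat list \<Rightarrow> nat) \<Rightarrow> bool" where
  "consistent t T \<sigma> \<longleftrightarrow> (\<forall>p \<in> verts t T. \<forall>l. obs T p = Some l \<longrightarrow> \<sigma> p = l)"

text \<open>X_t^(i): posterior probability that the root has label i given the revealed
  labels in the subtree of depth \<le> t.\<close>
definition X :: "nat \<Rightarrow> real \<Rightarrow> nat \<Rightarrow> tree \<Rightarrow> nat \<Rightarrow> real" where
  "X k \<theta> t T i =
     (\<Sum>\<sigma> \<in> {\<sigma> \<in> labelings k t T. consistent t T \<sigma> \<and> \<sigma> [] = i}. weight k \<theta> t T \<sigma>) /
     (\<Sum>\<sigma> \<in> {\<sigma> \<in> labelings k t T. consistent t T \<sigma>}. weight k \<theta> t T \<sigma>)"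

end

theory Submission
  imports Defs
begin

text \<open>The posterior of the root is proportional to its likelihood L_t(a), the
  total weight of the consistent labelings with root label a. Cutting a labeling
  at the children factors L_(t+1)(a) into one message per child. A child with
  revealed label l sends trans(a, l) L_t(l), so its ratio between two root labels
  does not depend on t. An unlabeled child sends
  (1 - \<theta>)/k \<Sum>_b L_t(b) + \<theta> L_t(a), which is proportional to
  1 + k\<theta>/(1 - \<theta>) X_t(a) and is the same for all a when t = 0. In the
  logarithm of the posterior ratio the labeled children therefore produce exactly
  the depth-1 term and the unlabeled children the sum.\<close>

lemma Nil_in_verts [simp]: "[] \<in> verts t T"
  by (cases t; cases T) auto

lemma finite_verts [simp]: "finite (verts t T)"
proof (induction t arbitrary: T)
  case 0 then show ?case by simp
next
  case (Suc t) then show ?case by (cases T) auto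
qed

lemma butlast_in_verts: "p \<in> verts t T \<Longrightarrow> butlast p \<in> verts t T"
proof (induction t arbitrary: T p)
  case 0 then show ?case by simp
next
  case (Suc t)
  obtain cs where T: "T = Node cs" by (cases T)
  show ?case
  proof (cases p)
    case Nil then show ?thesis using Suc.prems by simp
  next
    case (Cons n q)
    with Suc.prems T have "n < length cs" and "q \<in> verts t (snd (cs!n))" by auto
    with Cons T Suc.IH show ?thesis by (cases "q = []") auto
  qed
qed

lemma verts_Suc_Cons:
  "n < length cs \<Longrightarrow> n # q \<in> verts (Suc t) (Node cs) \<longleftrightarrow> q \<in> verts t (snd (cs!n))"
  by auto

lemma verts_Suc_minus_Nil:
  "verts (Suc t) (Node cs) - {[]} = (\<Union>n\<in>{..<length cs}. Cons n ` verts t (snd (cs!n)))"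
  by auto

lemma obs_Nil [simp]: "obs T [] = None"
  by (cases T) auto

lemma labels_ok_child:
  assumes "labels_ok k (Node cs)" "n < length cs"
  shows "labels_ok k (snd (cs!n))" and "fst (cs!n) = Some l \<Longrightarrow> l \<in> {1..k}"
proof -
  show "labels_ok k (snd (cs!n))" unfolding labels_ok_def
  proof (intro allI impI)
    fix p l assume o: "obs (snd (cs!n)) p = Some l"
    then have "p \<noteq> []" by auto
    then have "obs (Node cs) (n#p) = Some l" using o assms(2) by simp
    then show "l \<in> {1..k}" using assms(1) unfolding labels_ok_def by blast
  qed
next
  assume "fst (cs!n) = Some l"
  then have "obs (Node cs) [n] = Some l" using assms(2) by simp
  then show "l \<in> {1..k}" using assms(1) unfolding labels_ok_def by blast
qed

lemma finite_labelings [simp]: "finite (labelings k t T)"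
  unfolding labelings_def by (rule finite_PiE) auto

lemma labelings_root: "\<sigma> \<in> labelings k t T \<Longrightarrow> \<sigma> [] \<in> {1..k}"
  unfolding labelings_def using Nil_in_verts by blast

definition edge_weight :: "nat \<Rightarrow> real \<Rightarrow> nat \<Rightarrow> tree \<Rightarrow> (nat list \<Rightarrow> nat) \<Rightarrow> real" where
  "edge_weight k \<theta> t T \<sigma> = (\<Prod>p \<in> verts t T - {[]}. trans k \<theta> (\<sigma> (butlast p)) (\<sigma> p))"

definition likelihood :: "nat \<Rightarrow> real \<Rightarrow> nat \<Rightarrow> tree \<Rightarrow> nat \<Rightarrow> real" where
  "likelihood k \<theta> t T a =
     (\<Sum>\<sigma>\<in>labelings k t T. if consistent t T \<sigma> \<and> \<sigma> [] = a then edge_weight k \<theta> t T \<sigma> else 0)"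

lemma X_eq_likelihood:
  assumes "k > 0"
  shows "X k \<theta> t T i = likelihood k \<theta> t T i / (\<Sum>b\<in>{1..k}. likelihood k \<theta> t T b)"
proof -
  have num: "(\<Sum>\<sigma> \<in> {\<sigma> \<in> labelings k t T. consistent t T \<sigma> \<and> \<sigma> [] = i}. weight k \<theta> t T \<sigma>) =
      1 / real k * likelihood k \<theta> t T i"
    by (simp add: sum.inter_filter likelihood_def sum_distrib_left weight_def edge_weight_def
        if_distrib cong: if_cong)
  have "(\<Sum>b\<in>{1..k}. likelihood k \<theta> t T b) =
      (\<Sum>\<sigma>\<in>labelings k t T. \<Sum>b\<in>{1..k}.
         if b = \<sigma> [] then (if consistent t T \<sigma> then edge_weight k \<theta> t T \<sigma> else 0) else 0)"
    unfolding likelihood_def by (subst sum.swap) (auto intro!: sum.cong)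
  also have "\<dots> = (\<Sum>\<sigma>\<in>labelings k t T. if consistent t T \<sigma> then edge_weight k \<theta> t T \<sigma> else 0)"
    by (rule sum.cong) (auto dest: labelings_root simp: sum.delta)
  finally have den: "(\<Sum>\<sigma> \<in> {\<sigma> \<in> labelings k t T. consistent t T \<sigma>}. weight k \<theta> t T \<sigma>) =
      1 / real k * (\<Sum>b\<in>{1..k}. likelihood k \<theta> t T b)"
    by (simp add: sum.inter_filter sum_distrib_left weight_def edge_weight_def
        if_distrib cong: if_cong)
  show ?thesis unfolding X_def num den using assms by simp
qed

definition graft :: "nat \<Rightarrow> (nat option \<times> tree) list \<Rightarrow> nat \<times> (nat \<Rightarrow> nat list \<Rightarrow> nat) \<Rightarrow> nat list \<Rightarrow> nat" where
  "graft t cs x p =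
     (if p = [] then fst x else if p \<in> verts (Suc t) (Node cs) then snd x (hd p) (tl p) else undefined)"

definition ungraft :: "nat \<Rightarrow> (nat option \<times> tree) list \<Rightarrow> (nat list \<Rightarrow> nat) \<Rightarrow> nat \<times> (nat \<Rightarrow> nat list \<Rightarrow> nat)" where
  "ungraft t cs \<sigma> = (\<sigma> [], \<lambda>n\<in>{..<length cs}. \<lambda>q\<in>verts t (snd (cs!n)). \<sigma> (n#q))"

lemma graft_Nil [simp]: "graft t cs x [] = fst x"
  by (simp add: graft_def)

lemma graft_Cons:
  "n < length cs \<Longrightarrow> q \<in> verts t (snd (cs!n)) \<Longrightarrow> graft t cs x (n#q) = snd x n q"
  by (simp only: graft_def verts_Suc_Cons) simp

lemma bij_betw_graft:
  "bij_betw (graft t cs)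
     ({1..k} \<times> (\<Pi>\<^sub>E n\<in>{..<length cs}. labelings k t (snd (cs!n))))
     (labelings k (Suc t) (Node cs))"
proof (rule bij_betw_byWitness[where f' = "ungraft t cs"])
  show "\<forall>x \<in> {1..k} \<times> (\<Pi>\<^sub>E n\<in>{..<length cs}. labelings k t (snd (cs!n))). ungraft t cs (graft t cs x) = x"
  proof
    fix x assume "x \<in> {1..k} \<times> (\<Pi>\<^sub>E n\<in>{..<length cs}. labelings k t (snd (cs!n)))"
    then have \<tau>: "snd x \<in> (\<Pi>\<^sub>E n\<in>{..<length cs}. labelings k t (snd (cs!n)))"
      by (simp add: mem_Times_iff)
    have "(\<lambda>n\<in>{..<length cs}. \<lambda>q\<in>verts t (snd (cs!n)). graft t cs x (n#q)) n = snd x n" for n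
    proof (cases "n < length cs")
      case True
      then have "snd x n \<in> labelings k t (snd (cs!n))" using PiE_mem[OF \<tau>] by simp
      then have ext: "snd x n \<in> extensional (verts t (snd (cs!n)))"
        unfolding labelings_def by (simp add: PiE_iff)
      have "(\<lambda>q\<in>verts t (snd (cs!n)). graft t cs x (n#q)) q = snd x n q" for q
        using True ext by (cases "q \<in> verts t (snd (cs!n))") (simp_all add: graft_Cons extensional_def)
      with True show ?thesis by (simp add: fun_eq_iff)
    next
      case False then show ?thesis using \<tau> by (simp add: PiE_def extensional_def)
    qed
    then have "(\<lambda>n\<in>{..<length cs}. \<lambda>q\<in>verts t (snd (cs!n)). graft t cs x (n#q)) = snd x"
      by (rule ext)
    then show "ungraft t cs (graft t cs x) = x" by (simp add: ungraft_def)
  qed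
next
  show "\<forall>\<sigma> \<in> labelings k (Suc t) (Node cs). graft t cs (ungraft t cs \<sigma>) = \<sigma>"
  proof (intro ballI ext)
    fix \<sigma> p assume \<sigma>: "\<sigma> \<in> labelings k (Suc t) (Node cs)"
    show "graft t cs (ungraft t cs \<sigma>) p = \<sigma> p"
    proof (cases "p \<in> verts (Suc t) (Node cs)")
      case True
      show ?thesis
      proof (cases p)
        case (Cons n q)
        with True have "n < length cs" "q \<in> verts t (snd (cs!n))" by auto
        then show ?thesis using Cons by (simp add: graft_Cons ungraft_def)
      qed (simp add: ungraft_def)
    next
      case False
      then have "p \<noteq> []" and "\<sigma> p = undefined"
        using \<sigma> Nil_in_verts unfolding labelings_def by (blast, blast)
      with False show ?thesis by (simp only: graft_def if_False)
    qed
  qed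
next
  show "graft t cs ` ({1..k} \<times> (\<Pi>\<^sub>E n\<in>{..<length cs}. labelings k t (snd (cs!n)))) \<subseteq>
      labelings k (Suc t) (Node cs)"
  proof
    fix \<sigma> assume "\<sigma> \<in> graft t cs ` ({1..k} \<times> (\<Pi>\<^sub>E n\<in>{..<length cs}. labelings k t (snd (cs!n))))"
    then obtain a \<tau> where a: "a \<in> {1..k}"
      and \<tau>: "\<tau> \<in> (\<Pi>\<^sub>E n\<in>{..<length cs}. labelings k t (snd (cs!n)))"
      and \<sigma>: "\<sigma> = graft t cs (a, \<tau>)" by auto
    have "\<sigma> p \<in> {1..k}" if p: "p \<in> verts (Suc t) (Node cs)" for p
    proof (cases p)
      case Nil with a \<sigma> show ?thesis by simp
    next
      case (Cons n q)
      with p have n: "n < length cs" and q: "q \<in> verts t (snd (cs!n))" by auto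
      have "\<tau> n \<in> labelings k t (snd (cs!n))" using PiE_mem[OF \<tau>] n by simp
      with q show ?thesis using \<sigma> Cons n by (auto simp: graft_Cons labelings_def)
    qed
    moreover have "\<sigma> \<in> extensional (verts (Suc t) (Node cs))"
      using \<sigma> by (auto simp: graft_def extensional_def simp del: verts.simps)
    ultimately show "\<sigma> \<in> labelings k (Suc t) (Node cs)"
      unfolding labelings_def by (simp add: PiE_iff)
  qed
next
  show "ungraft t cs ` labelings k (Suc t) (Node cs) \<subseteq>
      {1..k} \<times> (\<Pi>\<^sub>E n\<in>{..<length cs}. labelings k t (snd (cs!n)))"
  proof
    fix \<rho> assume "\<rho> \<in> ungraft t cs ` labelings k (Suc t) (Node cs)"
    then obtain \<sigma> where \<sigma>: "\<sigma> \<in> labelings k (Suc t) (Node cs)" and \<rho>: "\<rho> = ungraft t cs \<sigma>"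
      by blast
    have "(\<lambda>q\<in>verts t (snd (cs!n)). \<sigma> (n#q)) \<in> labelings k t (snd (cs!n))" if n: "n < length cs" for n
    proof -
      have "\<sigma> (n#q) \<in> {1..k}" if "q \<in> verts t (snd (cs!n))" for q
        using \<sigma> that n unfolding labelings_def by (auto simp: PiE_iff)
      then show ?thesis unfolding labelings_def by (simp add: PiE_iff)
    qed
    then show "\<rho> \<in> {1..k} \<times> (\<Pi>\<^sub>E n\<in>{..<length cs}. labelings k t (snd (cs!n)))"
      using \<rho> labelings_root[OF \<sigma>] by (simp add: ungraft_def PiE_iff)
  qed
qed

lemma edge_weight_graft:
  "edge_weight k \<theta> (Suc t) (Node cs) (graft t cs x) =
     (\<Prod>n<length cs. trans k \<theta> (fst x) (snd x n []) * edge_weight k \<theta> t (snd (cs!n)) (snd x n))"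
proof -
  let ?f = "\<lambda>p. trans k \<theta> (graft t cs x (butlast p)) (graft t cs x p)"
  have "edge_weight k \<theta> (Suc t) (Node cs) (graft t cs x) =
      (\<Prod>n<length cs. prod ?f (Cons n ` verts t (snd (cs!n))))"
    unfolding edge_weight_def verts_Suc_minus_Nil by (rule prod.UNION_disjoint) auto
  also have "\<dots> = (\<Prod>n<length cs. trans k \<theta> (fst x) (snd x n []) * edge_weight k \<theta> t (snd (cs!n)) (snd x n))"
  proof (rule prod.cong[OF refl])
    fix n assume n: "n \<in> {..<length cs}"
    let ?V = "verts t (snd (cs!n))"
    have "prod ?f (Cons n ` ?V) = (\<Prod>q\<in>?V. ?f (n#q))"
      by (rule prod.reindex_cong[where l = "Cons n"]) (auto simp: inj_on_def)
    also have "\<dots> = (\<Prod>q\<in>?V. if q = [] then trans k \<theta> (fst x) (snd x n [])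
                                else trans k \<theta> (snd x n (butlast q)) (snd x n q))"
      using n by (intro prod.cong) (auto simp: graft_Cons butlast_in_verts)
    also have "\<dots> = trans k \<theta> (fst x) (snd x n []) *
        (\<Prod>q\<in>?V - {[]}. trans k \<theta> (snd x n (butlast q)) (snd x n q))"
      by (subst prod.remove[of _ "[]"]) (auto intro!: prod.cong)
    finally show "prod ?f (Cons n ` ?V) =
        trans k \<theta> (fst x) (snd x n []) * edge_weight k \<theta> t (snd (cs!n)) (snd x n)"
      by (simp add: edge_weight_def)
  qed
  finally show ?thesis .
qed

lemma consistent_graft:
  "consistent (Suc t) (Node cs) (graft t cs x) \<longleftrightarrow>
     (\<forall>n<length cs. (\<forall>l. fst (cs!n) = Some l \<longrightarrow> snd x n [] = l) \<and> consistent t (snd (cs!n)) (snd x n))"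
proof
  assume c: "consistent (Suc t) (Node cs) (graft t cs x)"
  show "\<forall>n<length cs. (\<forall>l. fst (cs!n) = Some l \<longrightarrow> snd x n [] = l) \<and> consistent t (snd (cs!n)) (snd x n)"
  proof (intro allI impI conjI)
    fix n l assume n: "n < length cs" and "fst (cs!n) = Some l"
    then have "obs (Node cs) [n] = Some l" and "[n] \<in> verts (Suc t) (Node cs)"
      by (auto simp only: obs.simps if_True refl verts_Suc_Cons Nil_in_verts)
    with c n show "snd x n [] = l" unfolding consistent_def by (metis graft_Cons Nil_in_verts)
  next
    fix n assume n: "n < length cs"
    show "consistent t (snd (cs!n)) (snd x n)"
      unfolding consistent_def
    proof (intro ballI allI impI)
      fix q l assume q: "q \<in> verts t (snd (cs!n))" and o: "obs (snd (cs!n)) q = Some l"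
      then have "q \<noteq> []" by auto
      with n q o have "n#q \<in> verts (Suc t) (Node cs)" and "obs (Node cs) (n#q) = Some l" by auto
      with c have "graft t cs x (n#q) = l" unfolding consistent_def by blast
      with n q show "snd x n q = l" by (simp add: graft_Cons)
    qed
  qed
next
  assume h: "\<forall>n<length cs. (\<forall>l. fst (cs!n) = Some l \<longrightarrow> snd x n [] = l) \<and> consistent t (snd (cs!n)) (snd x n)"
  show "consistent (Suc t) (Node cs) (graft t cs x)"
    unfolding consistent_def
  proof (intro ballI allI impI)
    fix p l assume p: "p \<in> verts (Suc t) (Node cs)" and o: "obs (Node cs) p = Some l"
    then obtain n q where p_eq: "p = n#q" and n: "n < length cs" and q: "q \<in> verts t (snd (cs!n))"
      by (cases p) auto
    with h o show "graft t cs x p = l" by (cases "q = []") (auto simp: graft_Cons consistent_def)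
  qed
qed

definition message :: "nat \<Rightarrow> real \<Rightarrow> nat \<Rightarrow> nat option \<times> tree \<Rightarrow> nat \<Rightarrow> real" where
  "message k \<theta> t c a = (\<Sum>b\<in>{1..k}.
     if \<forall>l. fst c = Some l \<longrightarrow> b = l then trans k \<theta> a b * likelihood k \<theta> t (snd c) b else 0)"

lemma sum_child_labelings_eq_message:
  "(\<Sum>\<tau>\<in>labelings k t (snd c).
      if (\<forall>l. fst c = Some l \<longrightarrow> \<tau> [] = l) \<and> consistent t (snd c) \<tau>
      then trans k \<theta> a (\<tau> []) * edge_weight k \<theta> t (snd c) \<tau> else 0)
   = message k \<theta> t c a"
proof -
  let ?F = "\<lambda>\<tau>. if (\<forall>l. fst c = Some l \<longrightarrow> \<tau> [] = l) \<and> consistent t (snd c) \<tau>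
                then trans k \<theta> a (\<tau> []) * edge_weight k \<theta> t (snd c) \<tau> else 0"
  have "message k \<theta> t c a = (\<Sum>b\<in>{1..k}. \<Sum>\<tau>\<in>labelings k t (snd c). if \<tau> [] = b then ?F \<tau> else 0)"
    unfolding message_def likelihood_def
    by (rule sum.cong[OF refl]) (auto simp: sum_distrib_left intro!: sum.cong sum.neutral)
  also have "\<dots> = (\<Sum>\<tau>\<in>labelings k t (snd c). \<Sum>b\<in>{1..k}. if \<tau> [] = b then ?F \<tau> else 0)"
    by (rule sum.swap)
  also have "\<dots> = (\<Sum>\<tau>\<in>labelings k t (snd c). ?F \<tau>)"
    by (rule sum.cong[OF refl]) (auto dest: labelings_root)
  finally show ?thesis by simp
qed

lemma likelihood_Suc:
  "likelihood k \<theta> (Suc t) (Node cs) a =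
     (if a \<in> {1..k} then \<Prod>n<length cs. message k \<theta> t (cs!n) a else 0)"
proof -
  let ?B = "\<Pi>\<^sub>E n\<in>{..<length cs}. labelings k t (snd (cs!n))"
  let ?G = "\<lambda>n \<tau>. if (\<forall>l. fst (cs!n) = Some l \<longrightarrow> \<tau> [] = l) \<and> consistent t (snd (cs!n)) \<tau>
                  then trans k \<theta> a (\<tau> []) * edge_weight k \<theta> t (snd (cs!n)) \<tau> else 0"
  let ?h = "\<lambda>\<sigma>. if consistent (Suc t) (Node cs) \<sigma> \<and> \<sigma> [] = a
                then edge_weight k \<theta> (Suc t) (Node cs) \<sigma> else 0"
  have "likelihood k \<theta> (Suc t) (Node cs) a = (\<Sum>x\<in>{1..k} \<times> ?B. ?h (graft t cs x))"
    unfolding likelihood_def by (rule sum.reindex_bij_betw[OF bij_betw_graft, symmetric])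
  also have "\<dots> = (\<Sum>x\<in>{1..k} \<times> ?B. if fst x = a then \<Prod>n<length cs. ?G n (snd x n) else 0)"
  proof (rule sum.cong[OF refl])
    fix x :: "nat \<times> (nat \<Rightarrow> nat list \<Rightarrow> nat)"
    have "(\<Prod>n<length cs. ?G n (snd x n)) =
        (if \<forall>n\<in>{..<length cs}. (\<forall>l. fst (cs!n) = Some l \<longrightarrow> snd x n [] = l) \<and> consistent t (snd (cs!n)) (snd x n)
         then \<Prod>n<length cs. trans k \<theta> a (snd x n []) * edge_weight k \<theta> t (snd (cs!n)) (snd x n) else 0)"
      by (induction "length cs") auto
    then show "?h (graft t cs x) = (if fst x = a then \<Prod>n<length cs. ?G n (snd x n) else 0)"
      by (auto simp: consistent_graft edge_weight_graft)
  qed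
  also have "\<dots> = (\<Sum>a'\<in>{1..k}. \<Sum>\<tau>\<in>?B. if a' = a then \<Prod>n<length cs. ?G n (\<tau> n) else 0)"
    by (subst sum.cartesian_product) (simp add: case_prod_beta)
  also have "\<dots> = (\<Sum>a'\<in>{1..k}. if a' = a then \<Sum>\<tau>\<in>?B. \<Prod>n<length cs. ?G n (\<tau> n) else 0)"
    by (intro sum.cong) auto
  also have "\<dots> = (if a \<in> {1..k} then \<Prod>n<length cs. \<Sum>\<tau>\<in>labelings k t (snd (cs!n)). ?G n \<tau> else 0)"
    by (simp add: prod_sum_PiE)
  also have "\<dots> = (if a \<in> {1..k} then \<Prod>n<length cs. message k \<theta> t (cs!n) a else 0)"
    by (simp add: sum_child_labelings_eq_message)
  finally show ?thesis .
qed

lemma likelihood_0: "likelihood k \<theta> 0 T b = (if b \<in> {1..k} then 1 else 0)"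
proof -
  have weight_0: "edge_weight k \<theta> 0 T \<sigma> = 1" for \<sigma>
    unfolding edge_weight_def by simp
  have "likelihood k \<theta> 0 T b = (\<Sum>\<sigma>\<in>(\<Pi>\<^sub>E p\<in>{[] :: nat list}. {1..k}). \<Prod>p\<in>{[]}. if \<sigma> p = b then 1 else (0::real))"
    unfolding likelihood_def labelings_def consistent_def by (simp add: weight_0 cong: if_cong)
  also have "\<dots> = (\<Prod>p\<in>{[] :: nat list}. \<Sum>c\<in>{1..k}. if c = b then 1 else (0::real))"
    by (rule prod_sum_PiE[symmetric]) auto
  finally show ?thesis by (simp add: sum.delta')
qed

lemma trans_pos: "0 < \<theta> \<Longrightarrow> \<theta> < 1 \<Longrightarrow> 0 < k \<Longrightarrow> 0 < trans k \<theta> a b"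
  by (simp add: trans_def add_pos_pos)

lemma message_None:
  assumes "a \<in> {1..k}"
  shows "message k \<theta> t (None, ch) a =
    (1 - \<theta>) / k * (\<Sum>b\<in>{1..k}. likelihood k \<theta> t ch b) + \<theta> * likelihood k \<theta> t ch a"
proof -
  have "message k \<theta> t (None, ch) a = (\<Sum>b\<in>{1..k}.
      (1 - \<theta>) / k * likelihood k \<theta> t ch b + (if b = a then \<theta> * likelihood k \<theta> t ch b else 0))"
    unfolding message_def by (intro sum.cong) (auto simp: trans_def algebra_simps)
  with assms show ?thesis by (simp add: sum.distrib sum_distrib_left)
qed

lemma message_Some:
  "l \<in> {1..k} \<Longrightarrow> message k \<theta> t (Some l, ch) a = trans k \<theta> a l * likelihood k \<theta> t ch l"
  unfolding message_def by (simp add: sum.delta')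

lemma message_0_None: "0 < k \<Longrightarrow> a \<in> {1..k} \<Longrightarrow> message k \<theta> 0 (None, ch) a = 1"
  by (simp add: message_None likelihood_0)

lemma message_pos:
  assumes "0 < \<theta>" "\<theta> < 1" "a \<in> {1..k}"
    and L: "\<forall>b\<in>{1..k}. 0 < likelihood k \<theta> t (snd c) b"
    and c: "\<forall>l. fst c = Some l \<longrightarrow> l \<in> {1..k}"
  shows "0 < message k \<theta> t c a"
proof (cases c)
  case (Pair r ch)
  have k: "0 < k" using assms(3) by simp
  show ?thesis
  proof (cases r)
    case None
    have "0 \<le> (\<Sum>b\<in>{1..k}. likelihood k \<theta> t ch b)"
      using L Pair by (intro sum_nonneg) (simp add: less_imp_le)
    then have "0 \<le> (1 - \<theta>) / k * (\<Sum>b\<in>{1..k}. likelihood k \<theta> t ch b)"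
      using assms(2) by simp
    moreover have "0 < \<theta> * likelihood k \<theta> t ch a"
      using L Pair assms(1,3) by simp
    ultimately show ?thesis using Pair None message_None[OF assms(3)] by simp
  next
    case (Some l)
    then show ?thesis using Pair c L message_Some trans_pos[OF assms(1,2) k] by auto
  qed
qed

lemma likelihood_pos:
  assumes "0 < \<theta>" "\<theta> < 1" "labels_ok k T" "a \<in> {1..k}"
  shows "0 < likelihood k \<theta> t T a"
  using assms(3,4)
proof (induction t arbitrary: T a)
  case 0 then show ?case by (simp add: likelihood_0)
next
  case (Suc t)
  obtain cs where T: "T = Node cs" by (cases T)
  have "0 < message k \<theta> t (cs!n) a" if "n < length cs" for n
    using Suc labels_ok_child[of k cs n] that assms(1,2) T by (intro message_pos) auto
  then show ?case using Suc.prems(2) T by (auto simp: likelihood_Suc intro!: prod_pos)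
qed

lemma ln_posterior_ratio:
  assumes "0 < \<theta>" "\<theta> < 1" "labels_ok k (Node cs)" "i \<in> {1..k}" "j \<in> {1..k}"
  shows "ln (X k \<theta> (Suc t) (Node cs) i / X k \<theta> (Suc t) (Node cs) j) =
    (\<Sum>n<length cs. ln (message k \<theta> t (cs!n) i / message k \<theta> t (cs!n) j))"
proof -
  have k: "0 < k" using assms(4) by simp
  have pos: "0 < message k \<theta> t (cs!n) a" if "n < length cs" "a \<in> {1..k}" for n a
    using labels_ok_child[OF assms(3) that(1)] that likelihood_pos[OF assms(1,2)]
    by (intro message_pos[OF assms(1,2)]) auto
  have "0 < (\<Sum>b\<in>{1..k}. likelihood k \<theta> (Suc t) (Node cs) b)"
    using k likelihood_pos[OF assms(1-3)] by (intro sum_pos) auto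
  then have "X k \<theta> (Suc t) (Node cs) i / X k \<theta> (Suc t) (Node cs) j =
      likelihood k \<theta> (Suc t) (Node cs) i / likelihood k \<theta> (Suc t) (Node cs) j"
    using k by (simp add: X_eq_likelihood)
  also have "\<dots> = (\<Prod>n<length cs. message k \<theta> t (cs!n) i / message k \<theta> t (cs!n) j)"
    using assms(4,5) by (simp add: likelihood_Suc prod_dividef)
  also have "ln \<dots> = (\<Sum>n<length cs. ln (message k \<theta> t (cs!n) i / message k \<theta> t (cs!n) j))"
    using pos assms(4,5) by (intro ln_prod) (auto simp: less_imp_neq[symmetric])
  finally show ?thesis .
qed

lemma message_ratio_labeled:
  assumes "0 < \<theta>" "\<theta> < 1" "labels_ok k (snd c)" "fst c = Some l" "l \<in> {1..k}"
  shows "message k \<theta> t c i / message k \<theta> t c j = message k \<theta> 0 c i / message k \<theta> 0 c j"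
proof -
  obtain ch where c: "c = (Some l, ch)" using assms(4) by (cases c) auto
  have "likelihood k \<theta> t ch l \<noteq> 0"
    using likelihood_pos[OF assms(1,2)] assms(3,5) c by (metis less_irrefl snd_conv)
  with assms(5) show ?thesis by (simp add: c message_Some likelihood_0)
qed

lemma message_ratio_unlabeled:
  assumes "0 < \<theta>" "\<theta> < 1" "labels_ok k ch" "i \<in> {1..k}" "j \<in> {1..k}"
  shows "message k \<theta> t (None, ch) i / message k \<theta> t (None, ch) j =
    (1 + k * \<theta> / (1 - \<theta>) * X k \<theta> t ch i) / (1 + k * \<theta> / (1 - \<theta>) * X k \<theta> t ch j)"
proof -
  let ?S = "\<Sum>b\<in>{1..k}. likelihood k \<theta> t ch b"
  have k: "0 < k" using assms(4) by simp
  have S: "0 < ?S" using k likelihood_pos[OF assms(1-3)] by (intro sum_pos) auto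
  have "message k \<theta> t (None, ch) a = (1 - \<theta>) / k * ?S * (1 + k * \<theta> / (1 - \<theta>) * X k \<theta> t ch a)"
    if "a \<in> {1..k}" for a
    using that k assms(2) S by (simp add: message_None X_eq_likelihood field_simps)
  moreover have "(1 - \<theta>) / k * ?S \<noteq> 0" using k assms(2) S by simp
  ultimately show ?thesis using assms(4,5) by simp
qed

theorem lemma1:
  fixes k :: nat and \<theta> :: real and t :: nat and T :: tree and i j :: nat
  assumes "0 < \<theta>" "\<theta> < 1"
    and "labels_ok k T"
    and "i \<in> {1..k}" "j \<in> {1..k}" "i \<noteq> j"
    and "t \<ge> 2"
  shows "ln (X k \<theta> t T i / X k \<theta> t T j) =
           ln (X k \<theta> 1 T i / X k \<theta> 1 T j)
         + (\<Sum>n \<in> {n. n < length (children T) \<and> fst (children T ! n) = None}.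
              ln ((1 + (k * \<theta> / (1 - \<theta>)) * X k \<theta> (t - 1) (snd (children T ! n)) i) /
                  (1 + (k * \<theta> / (1 - \<theta>)) * X k \<theta> (t - 1) (snd (children T ! n)) j)))"
proof -
  obtain cs where T: "T = Node cs" by (cases T)
  obtain s where t: "t = Suc s" using \<open>t \<ge> 2\<close> by (cases t) auto
  have ok: "labels_ok k (Node cs)" using assms(3) T by simp
  define r where "r d n = ln (message k \<theta> d (cs!n) i / message k \<theta> d (cs!n) j)" for d n
  define U where "U = {n. n < length cs \<and> fst (cs!n) = None}"
  have "ln (X k \<theta> t T i / X k \<theta> t T j) - ln (X k \<theta> 1 T i / X k \<theta> 1 T j) =
      (\<Sum>n<length cs. r s n - r 0 n)"
    using ln_posterior_ratio[OF assms(1,2) ok assms(4,5), of s]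
      ln_posterior_ratio[OF assms(1,2) ok assms(4,5), of 0]
    by (simp add: T t r_def sum_subtractf)
  also have "\<dots> = (\<Sum>n\<in>U. r s n - r 0 n)"
  proof (rule sum.mono_neutral_right)
    show "\<forall>n\<in>{..<length cs} - U. r s n - r 0 n = 0"
    proof
      fix n assume "n \<in> {..<length cs} - U"
      then obtain l where n: "n < length cs" and l: "fst (cs!n) = Some l" unfolding U_def by auto
      show "r s n - r 0 n = 0"
        unfolding r_def using message_ratio_labeled[OF assms(1,2) labels_ok_child(1)[OF ok n] l
            labels_ok_child(2)[OF ok n l], of s] by simp
    qed
  qed (auto simp: U_def)
  also have "\<dots> = (\<Sum>n\<in>U. ln ((1 + k * \<theta> / (1 - \<theta>) * X k \<theta> s (snd (cs!n)) i) /
                              (1 + k * \<theta> / (1 - \<theta>) * X k \<theta> s (snd (cs!n)) j)))"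
  proof (rule sum.cong[OF refl])
    fix n assume "n \<in> U"
    then obtain ch where n: "n < length cs" and u: "cs!n = (None, ch)"
      unfolding U_def by (cases "cs!n") auto
    have "labels_ok k ch" using labels_ok_child(1)[OF ok n] u by simp
    then show "r s n - r 0 n = ln ((1 + k * \<theta> / (1 - \<theta>) * X k \<theta> s (snd (cs!n)) i) /
                                  (1 + k * \<theta> / (1 - \<theta>) * X k \<theta> s (snd (cs!n)) j))"
      using assms(4,5) unfolding r_def u
      by (simp add: message_ratio_unlabeled[OF assms(1,2)] message_0_None)
  qed
  finally show ?thesis by (simp add: T t U_def)
qed

end
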